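(* Assume conditions (i)–(vii) listed in the context. For $R>0$ let $K^R_\lambda=\{\lambda\in K_\lambda:\ \max_{t\in[0,\tau]}|\lambda(t)|\le R\}$ and $K^R=K^R_\lambda\times\Theta_\beta$. Then there exists a nonrandom $R_0>\max_{t}\lambda_0(t)$ such that for every $R\ge R_0$, almost surely there is $n_0$ such that for all $n\ge n_0$, $$\sup_{(\lambda,\beta)\in K^R}Q_n^{cor}(\lambda,\beta)>\sup_{(\lambda,\beta)\in K\setminus K^R}Q_n^{cor}(\lambda,\beta).$$ More precisely, $\limsup_{n\to\infty}\sup_{(\lambda,\beta)\in K\setminus K^R}Q_n^{cor}(\lambda,\beta)\to-\infty$ as $R\to+\infty$, almost surely.
   Context: Model: a lifetime $T$ has conditional hazard $\lambda(t\mid X)=\lambda_0(t)\exp(\beta_0^TX)$, $t\ge 0$, given a random covariate $X\in\mathbb R^m$, where $\lambda_0\in C[0,\tau]$ is the baseline hazard and $\beta_0\in\mathbb R^m$. A censor $C$ takes values in $[0,\tau]$. One observes $Y=\min\{T,C\}$, $\Delta=I_{\{T\le C\}}$ and $W=X+U$, where the measurement error $U$ has known moment generating function $M_U(z)=\mathsf E e^{z^TU}$; $(T,X)$, $C$ and $U$ are mutually independent. The data $(Y_i,\Delta_i,W_i)$, $i=1,\dots,n$, come from i.i.d. copies of the model. Objective function: $$Q_n^{cor}(\lambda,\beta)=\frac1n\sum_{i=1}^n q(Y_i,\Delta_i,W_i;\lambda,\beta),\quad q(Y,\Delta,W;\lambda,\beta)=\Delta(\log\lambda(Y)+\beta^TW)-\frac{\exp(\beta^TW)}{M_U(\beta)}\int_0^Y\lambda(u)\,du,$$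 with the convention that if $\lambda(Y)=0$ then $\Delta\log\lambda(Y)=0$ when $\Delta=0$ and $=-\infty$ when $\Delta=1$. Conditions: (i) $K_\lambda=\{f:[0,\tau]\to\mathbb R:\ f(t)\ge0\ \forall t,\ |f(t)-f(s)|\le L|t-s|\ \forall t,s\in[0,\tau]\}$ for a fixed constant $L>0$. (ii) $\Theta_\beta\subset\mathbb R^m$ is compact. (iii) $\mathsf EU=0$ and $\mathsf E e^{D\|U\|}<\infty$ where $D=\max_{\beta\in\Theta_\beta}\|\beta\|+\epsilon$ for some $\epsilon>0$. (iv) $\mathsf E e^{D\|X\|}<\infty$. (v) $\mathsf P(C>\tau)=0$ and $\mathsf P(C>\tau-\epsilon)>0$ for all $\epsilon>0$. (vi) The covariance matrix of $X$ is positive definite. (vii) $(\lambda_0,\beta_0)\in K:=K_\lambda\times\Theta_\beta$ and $\lambda_0(t)>0$ for all $t\in[0,\tau]$. *)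

theory Defs
  imports "HOL-Probability.Probability"
begin

text \<open>Parameter space for the baseline hazard: nonnegative L-Lipschitz functions on [0,tau].
  Functions are represented as real => real; only their values on [0,tau] matter.\<close>
definition Klam :: "real \<Rightarrow> real \<Rightarrow> (real \<Rightarrow> real) set" where
  "Klam L \<tau> = {f. (\<forall>t\<in>{0..\<tau>}. 0 \<le> f t) \<and>
                   (\<forall>t\<in>{0..\<tau>}. \<forall>s\<in>{0..\<tau>}. \<bar>f t - f s\<bar> \<le> L * \<bar>t - s\<bar>)}"

definition KlamR :: "real \<Rightarrow> real \<Rightarrow> real \<Rightarrow> (real \<Rightarrow> real) set" where
  "KlamR L \<tau> R = {f \<in> Klam L \<tau>. \<forall>t\<in>{0..\<tau>}. \<bar>f t\<bar> \<le> R}"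

definition mgf :: "'w measure \<Rightarrow> ('w \<Rightarrow> real^'m) \<Rightarrow> real^'m \<Rightarrow> real" where
  "mgf M U z = (\<integral>\<omega>. exp (z \<bullet> U \<omega>) \<partial>M)"

definition covmat :: "'w measure \<Rightarrow> ('w \<Rightarrow> real^'m) \<Rightarrow> 'm \<Rightarrow> 'm \<Rightarrow> real" where
  "covmat M X i j = (\<integral>\<omega>. (X \<omega> $ i - (\<integral>\<omega>'. X \<omega>' $ i \<partial>M)) *
                            (X \<omega> $ j - (\<integral>\<omega>'. X \<omega>' $ j \<partial>M)) \<partial>M)"

text \<open>The contribution q(Y,Delta,W;lambda,beta), with values in the extended reals
  (Delta log lambda(Y) = -infinity if Delta = 1 and lambda(Y) = 0, and = 0 if Delta = 0).\<close>
definition qcor :: "(real^'m \<Rightarrow> real) \<Rightarrow> real \<Rightarrow> bool \<Rightarrow> real^'m \<Rightarrow>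
                    (real \<Rightarrow> real) \<Rightarrow> real^'m \<Rightarrow> ereal" where
  "qcor MU y d w lam b =
     (if d then (if lam y = 0 then -\<infinity> else ereal (ln (lam y) + b \<bullet> w)) else 0)
     - ereal (exp (b \<bullet> w) / MU b * integral {0..y} lam)"

definition Qcor :: "'w measure \<Rightarrow> (nat \<Rightarrow> 'w \<Rightarrow> real) \<Rightarrow> (nat \<Rightarrow> 'w \<Rightarrow> real^'m) \<Rightarrow>
                    (nat \<Rightarrow> 'w \<Rightarrow> real) \<Rightarrow> (nat \<Rightarrow> 'w \<Rightarrow> real^'m) \<Rightarrow>
                    nat \<Rightarrow> (real \<Rightarrow> real) \<Rightarrow> real^'m \<Rightarrow> 'w \<Rightarrow> ereal" where
  "Qcor M T X C U n lam b \<omega> =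
     ereal (1 / real n) *
       (\<Sum>i<n. qcor (mgf M (U 0)) (min (T i \<omega>) (C i \<omega>)) (T i \<omega> \<le> C i \<omega>)
                    (X i \<omega> + U i \<omega>) lam b)"

definition indep_rv :: "'w measure \<Rightarrow> ('w \<Rightarrow> 'a::topological_space) \<Rightarrow> ('w \<Rightarrow> 'b::topological_space) \<Rightarrow> bool" where
  "indep_rv M X Y \<longleftrightarrow> (\<forall>A\<in>sets borel. \<forall>B\<in>sets borel.
     measure M {\<omega> \<in> space M. X \<omega> \<in> A \<and> Y \<omega> \<in> B}
     = measure M {\<omega> \<in> space M. X \<omega> \<in> A} * measure M {\<omega> \<in> space M. Y \<omega> \<in> B})"

end

theory Submission
  imports Defs "HOL-Library.Discrete_Functions"
begin

text \<open>
  If \<lambda> exceeds R somewhere on [0, \<tau>], the Lipschitz condition keeps \<lambda> above R - L \<tau> on the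
  whole interval. Writing V_i = |X_i| + |U_i| and choosing sup |\<beta>| \<le> a < D, observation i then
  contributes at most log (R + L \<tau>) + exp (a V_i) - (R - L \<tau>) exp (-a V_i) Y_i / sup M_U.
  The moment condition gives exp (a V) a finite p-th moment for some p > 1, and exp (-a V) Y is
  bounded with positive mean because P(C > 0) > 0. Almost sure linear bounds on the partial sums
  of both (Chebyshev along n = 2^k, with truncation at level 2^k in the L^p case, and
  Borel-Cantelli) yield Q_n \<le> H - e R on K - K^R for all large n, uniformly in R, whereas
  Q_n (1, \<beta>) \<ge> -G.
\<close>

section \<open>Identically distributed and independent random variables\<close>

lemma measurable_fst_borel [measurable]: "fst \<in> borel_measurable borel"
  by (intro borel_measurable_continuous_onI continuous_on_fst continuous_on_id)

lemma measurable_snd_borel [measurable]: "snd \<in> borel_measurable borel"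
  by (intro borel_measurable_continuous_onI continuous_on_snd continuous_on_id)

lemma integral_eq_if_distr_eq:
  fixes f :: "'b::topological_space \<Rightarrow> real"
  assumes "\<xi> \<in> borel_measurable M" "\<eta> \<in> borel_measurable M"
    and "distr M borel \<xi> = distr M borel \<eta>" and "f \<in> borel_measurable borel"
  shows "(\<integral>\<omega>. f (\<xi> \<omega>) \<partial>M) = (\<integral>\<omega>. f (\<eta> \<omega>) \<partial>M)"
  using assms by (metis integral_distr)

lemma measure_eq_if_distr_eq:
  fixes \<xi> \<eta> :: "'a \<Rightarrow> 'b::topological_space"
  assumes "\<xi> \<in> borel_measurable M" "\<eta> \<in> borel_measurable M"
    and "distr M borel \<xi> = distr M borel \<eta>" and "A \<in> sets borel"
  shows "measure M {\<omega>\<in>space M. \<xi> \<omega> \<in> A} = measure M {\<omega>\<in>space M. \<eta> \<omega> \<in> A}"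
proof -
  have "measure M {\<omega>\<in>space M. \<xi> \<omega> \<in> A} = measure (distr M borel \<xi>) A"
    using assms by (subst measure_distr) (auto intro!: arg_cong[where f="measure M"])
  also have "\<dots> = measure (distr M borel \<eta>) A" by (simp only: assms(3))
  also have "\<dots> = measure M {\<omega>\<in>space M. \<eta> \<omega> \<in> A}"
    using assms by (subst measure_distr) (auto intro!: arg_cong[where f="measure M"])
  finally show ?thesis .
qed

lemma (in prob_space) AE_if_distr_eq:
  fixes \<xi> \<eta> :: "'a \<Rightarrow> 'b::topological_space"
  assumes [measurable]: "\<xi> \<in> borel_measurable M" "\<eta> \<in> borel_measurable M" "A \<in> sets borel"
    and "distr M borel \<xi> = distr M borel \<eta>" and "AE \<omega> in M. \<eta> \<omega> \<in> A"
  shows "AE \<omega> in M. \<xi> \<omega> \<in> A"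
proof -
  have "prob {\<omega>\<in>space M. \<eta> \<omega> \<in> A} = 1"
    using assms(5) by (subst prob_Collect_eq_1) auto
  then have "prob {\<omega>\<in>space M. \<xi> \<omega> \<in> A} = 1"
    using measure_eq_if_distr_eq[of \<xi> M \<eta> A] assms by simp
  then show ?thesis by (subst (asm) prob_Collect_eq_1) auto
qed

lemma (in prob_space) indep_var_if_indep_vars:
  assumes "indep_vars (\<lambda>_. N) \<xi> I" "i \<in> I" "j \<in> I" "i \<noteq> j"
  shows "indep_var N (\<xi> i) N (\<xi> j)"
proof -
  have "indep_var (PiM {i} (\<lambda>_. N)) (\<lambda>\<omega>. restrict (\<lambda>k. \<xi> k \<omega>) {i})
                  (PiM {j} (\<lambda>_. N)) (\<lambda>\<omega>. restrict (\<lambda>k. \<xi> k \<omega>) {j})"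
    using assms by (intro indep_var_restrict[of _ _ I]) auto
  then have "indep_var N ((\<lambda>x. x i) \<circ> (\<lambda>\<omega>. restrict (\<lambda>k. \<xi> k \<omega>) {i}))
                       N ((\<lambda>x. x j) \<circ> (\<lambda>\<omega>. restrict (\<lambda>k. \<xi> k \<omega>) {j}))"
    by (rule indep_var_compose) (auto intro: measurable_component_singleton)
  then show ?thesis by (simp add: comp_def)
qed

lemma (in prob_space) indep_var_if_indep_rv:
  fixes X Y :: "'a \<Rightarrow> 'b::topological_space"
  assumes [measurable]: "X \<in> borel_measurable M" "Y \<in> borel_measurable M"
    and "indep_rv M X Y"
  shows "indep_var borel X borel Y"
proof -
  let ?E = "\<lambda>Z :: 'a \<Rightarrow> _. {Z -` A \<inter> space M |A. A \<in> sets borel}"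
  have "indep_set (?E X) (?E Y)"
    unfolding indep_sets2_eq
  proof (intro conjI ballI)
    fix a b assume "a \<in> ?E X" "b \<in> ?E Y"
    then obtain A B where "A \<in> sets borel" "a = X -` A \<inter> space M"
      and "B \<in> sets borel" "b = Y -` B \<inter> space M"
      by blast
    moreover have "a \<inter> b = {\<omega> \<in> space M. X \<omega> \<in> A \<and> Y \<omega> \<in> B}"
      using \<open>a = _\<close> \<open>b = _\<close> by auto
    ultimately show "prob (a \<inter> b) = prob a * prob b"
      using \<open>indep_rv M X Y\<close> unfolding indep_rv_def by (simp add: vimage_def Int_def conj_commute)
  qed auto
  moreover have "(\<lambda>i. {case_bool X Y i -` A \<inter> space M |A. A \<in> sets (case_bool borel borel i)})
      = case_bool (?E X) (?E Y)"
    by (rule ext) (simp split: bool.split)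
  ultimately show ?thesis
    unfolding indep_var_def indep_vars_def2 indep_set_def by (auto split: bool.split)
qed

lemma (in prob_space) indep_var_integral_mult:
  fixes f g :: "'b::topological_space \<Rightarrow> real"
  assumes "indep_var borel X borel Y"
    and "f \<in> borel_measurable borel" "g \<in> borel_measurable borel"
    and "integrable M (\<lambda>\<omega>. f (X \<omega>))" "integrable M (\<lambda>\<omega>. g (Y \<omega>))"
  shows "(\<integral>\<omega>. f (X \<omega>) * g (Y \<omega>) \<partial>M) = (\<integral>\<omega>. f (X \<omega>) \<partial>M) * (\<integral>\<omega>. g (Y \<omega>) \<partial>M)"
    and "integrable M (\<lambda>\<omega>. f (X \<omega>) * g (Y \<omega>))"
proof -
  have "indep_var borel (f \<circ> X) borel (g \<circ> Y)"
    using assms(1-3) by (rule indep_var_compose)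
  with assms(4,5) show "(\<integral>\<omega>. f (X \<omega>) * g (Y \<omega>) \<partial>M) = (\<integral>\<omega>. f (X \<omega>) \<partial>M) * (\<integral>\<omega>. g (Y \<omega>) \<partial>M)"
    and "integrable M (\<lambda>\<omega>. f (X \<omega>) * g (Y \<omega>))"
    using indep_var_lebesgue_integral indep_var_integrable by (auto simp: comp_def)
qed

lemma (in prob_space) expectation_pos:
  fixes f :: "'a \<Rightarrow> real"
  assumes "integrable M f" "\<And>\<omega>. 0 \<le> f \<omega>"
    and "{\<omega>\<in>space M. P \<omega>} \<in> events" "0 < prob {\<omega>\<in>space M. P \<omega>}"
    and "AE \<omega> in M. P \<omega> \<longrightarrow> 0 < f \<omega>"
  shows "0 < expectation f"
proof -
  have "expectation f \<noteq> 0"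
  proof
    assume "expectation f = 0"
    then have "AE \<omega> in M. f \<omega> = 0"
      using integral_nonneg_eq_0_iff_AE[OF assms(1)] assms(2) by simp
    with assms(5) have "AE \<omega> in M. \<not> P \<omega>"
      by eventually_elim auto
    then have "prob {\<omega>\<in>space M. P \<omega>} = 0"
      using prob_Collect_eq_0[OF assms(3)] by simp
    with assms(4) show False
      by simp
  qed
  moreover have "0 \<le> expectation f"
    using assms(2) by (simp add: integral_nonneg_AE)
  ultimately show ?thesis by simp
qed

section \<open>Almost sure linear bounds for partial sums\<close>

lemma (in prob_space) expectation_square_sum_pairwise_indep:
  fixes \<xi> :: "nat \<Rightarrow> 'a \<Rightarrow> 'b::topological_space" and h :: "'b \<Rightarrow> real"
  assumes [measurable]: "\<And>i. \<xi> i \<in> borel_measurable M" "h \<in> borel_measurable borel"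
    and indep: "\<And>i j. i \<noteq> j \<Longrightarrow> indep_var borel (\<xi> i) borel (\<xi> j)"
    and distr: "\<And>i. distr M borel (\<xi> i) = distr M borel (\<xi> 0)"
    and bounded: "\<And>x. \<bar>h x\<bar> \<le> b" and centered: "expectation (\<lambda>\<omega>. h (\<xi> 0 \<omega>)) = 0"
  shows "expectation (\<lambda>\<omega>. (\<Sum>i<N. h (\<xi> i \<omega>))\<^sup>2) = real N * expectation (\<lambda>\<omega>. (h (\<xi> 0 \<omega>))\<^sup>2)"
proof -
  have integrable_h: "integrable M (\<lambda>\<omega>. h (\<xi> i \<omega>))" for i
    by (rule integrable_const_bound[where B=b]) (use bounded in auto)
  have integrable_hh: "integrable M (\<lambda>\<omega>. h (\<xi> i \<omega>) * h (\<xi> j \<omega>))" for i j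
  proof (rule integrable_const_bound[where B="b\<^sup>2"])
    show "AE \<omega> in M. norm (h (\<xi> i \<omega>) * h (\<xi> j \<omega>)) \<le> b\<^sup>2"
      using bounded
      by (auto simp: abs_mult power2_eq_square intro!: mult_mono order.trans[OF abs_ge_zero])
  qed measurable
  have mixed: "expectation (\<lambda>\<omega>. h (\<xi> i \<omega>) * h (\<xi> j \<omega>))
      = (if i = j then expectation (\<lambda>\<omega>. (h (\<xi> 0 \<omega>))\<^sup>2) else 0)" for i j
  proof (cases "i = j")
    case True
    then show ?thesis
      using integral_eq_if_distr_eq[of "\<xi> i" M "\<xi> 0" "\<lambda>x. (h x)\<^sup>2"] distr
      by (simp add: power2_eq_square)
  next
    case False
    have "expectation (\<lambda>\<omega>. h (\<xi> i \<omega>)) = 0"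
      using integral_eq_if_distr_eq[of "\<xi> i" M "\<xi> 0" h] distr centered by simp
    with False show ?thesis
      using indep_var_integral_mult(1)[OF indep[OF False] _ _ integrable_h integrable_h] by simp
  qed
  have "expectation (\<lambda>\<omega>. (\<Sum>i<N. h (\<xi> i \<omega>))\<^sup>2)
      = (\<Sum>i<N. \<Sum>j<N. expectation (\<lambda>\<omega>. h (\<xi> i \<omega>) * h (\<xi> j \<omega>)))"
    using integrable_hh
    by (simp add: power2_eq_square sum_product Bochner_Integration.integral_sum
        Bochner_Integration.integrable_sum)
  also have "\<dots> = real N * expectation (\<lambda>\<omega>. (h (\<xi> 0 \<omega>))\<^sup>2)"
    by (simp add: mixed sum.delta)
  finally show ?thesis .
qed

lemma (in prob_space) prob_sum_deviation_le:
  fixes \<xi> :: "nat \<Rightarrow> 'a \<Rightarrow> 'b::topological_space" and g :: "'b \<Rightarrow> real"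
  assumes [measurable]: "\<And>i. \<xi> i \<in> borel_measurable M" "g \<in> borel_measurable borel"
    and indep: "\<And>i j. i \<noteq> j \<Longrightarrow> indep_var borel (\<xi> i) borel (\<xi> j)"
    and distr: "\<And>i. distr M borel (\<xi> i) = distr M borel (\<xi> 0)"
    and bounded: "\<And>x. \<bar>g x\<bar> \<le> b" and "0 < a"
  shows "prob {\<omega>\<in>space M. a \<le> \<bar>(\<Sum>i<N. g (\<xi> i \<omega>)) - real N * expectation (\<lambda>\<omega>. g (\<xi> 0 \<omega>))\<bar>}
          \<le> real N * expectation (\<lambda>\<omega>. (g (\<xi> 0 \<omega>))\<^sup>2) / a\<^sup>2"
proof -
  define \<mu> where "\<mu> = expectation (\<lambda>\<omega>. g (\<xi> 0 \<omega>))"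
  define S where "S \<omega> = (\<Sum>i<N. g (\<xi> i \<omega>) - \<mu>)" for \<omega>
  have integrable_g: "integrable M (\<lambda>\<omega>. g (\<xi> 0 \<omega>))"
    by (rule integrable_const_bound[where B=b])
      (use bounded in \<open>auto intro!: AE_I2 order.trans[OF _ abs_ge_self]\<close>)
  have "(g x)\<^sup>2 \<le> b\<^sup>2" for x
    using power_mono[OF bounded[of x] abs_ge_zero, of 2] by simp
  then have integrable_g2: "integrable M (\<lambda>\<omega>. (g (\<xi> 0 \<omega>))\<^sup>2)"
    by (intro integrable_const_bound[where B="b\<^sup>2"]) auto
  have deviation_bounded: "\<bar>g x - \<mu>\<bar> \<le> b + \<bar>\<mu>\<bar>" for x
    using bounded[of x] by linarith
  then have ES2: "expectation (\<lambda>\<omega>. (S \<omega>)\<^sup>2) = real N * variance (\<lambda>\<omega>. g (\<xi> 0 \<omega>))"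
    unfolding S_def \<mu>_def
    by (intro expectation_square_sum_pairwise_indep[where \<xi>=\<xi>])
      (use indep distr integrable_g in \<open>auto simp: prob_space\<close>)
  have "integrable M (\<lambda>\<omega>. (S \<omega>)\<^sup>2)"
  proof (rule integrable_const_bound[where B="(real N * (b + \<bar>\<mu>\<bar>))\<^sup>2"])
    have "\<bar>S \<omega>\<bar> \<le> real N * (b + \<bar>\<mu>\<bar>)" for \<omega>
    proof -
      have "\<bar>S \<omega>\<bar> \<le> (\<Sum>i<N. \<bar>g (\<xi> i \<omega>) - \<mu>\<bar>)" unfolding S_def by (rule sum_abs)
      also have "\<dots> \<le> real N * (b + \<bar>\<mu>\<bar>)"
        using sum_bounded_above[of "{..<N}" "\<lambda>i. \<bar>g (\<xi> i \<omega>) - \<mu>\<bar>" "b + \<bar>\<mu>\<bar>"] deviation_bounded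
        by simp
      finally show ?thesis .
    qed
    from power_mono[OF this abs_ge_zero, where n=2]
    show "AE \<omega> in M. norm ((S \<omega>)\<^sup>2) \<le> (real N * (b + \<bar>\<mu>\<bar>))\<^sup>2"
      by simp
  qed (auto simp: S_def)
  then have "prob {\<omega>\<in>space M. a\<^sup>2 \<le> (S \<omega>)\<^sup>2} \<le> expectation (\<lambda>\<omega>. (S \<omega>)\<^sup>2) / a\<^sup>2"
    using \<open>0 < a\<close> by (intro integral_Markov_inequality_measure[where A="space M"]) auto
  also have "\<dots> \<le> real N * expectation (\<lambda>\<omega>. (g (\<xi> 0 \<omega>))\<^sup>2) / a\<^sup>2"
    unfolding ES2 variance_eq[OF integrable_g integrable_g2]
    by (intro divide_right_mono mult_left_mono) auto
  finally show ?thesis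
    using \<open>0 < a\<close> abs_le_square_iff[of a]
    by (simp add: S_def sum_subtractf \<mu>_def)
qed

lemma eventually_floor_log:
  assumes "eventually P sequentially"
  shows "eventually (\<lambda>n. P (floor_log n)) sequentially"
proof -
  obtain K where "\<And>k. K \<le> k \<Longrightarrow> P k"
    using assms unfolding eventually_sequentially by blast
  moreover have "K \<le> floor_log n" if "2 ^ K \<le> n" for n
    using floor_log_le_iff[OF that] by simp
  ultimately show ?thesis
    unfolding eventually_sequentially by blast
qed

lemma floor_log_real_bounds:
  shows "0 < n \<Longrightarrow> 2 ^ floor_log n \<le> real n" and "real n < 2 ^ Suc (floor_log n)"
proof -
  show "0 < n \<Longrightarrow> 2 ^ floor_log n \<le> real n"
    using floor_log_exp2_le[of n] by (metis of_nat_le_iff of_nat_numeral of_nat_power)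
  show "real n < 2 ^ Suc (floor_log n)"
    using floor_log_exp2_gt[of n] by (metis of_nat_less_iff of_nat_numeral of_nat_power power_Suc)
qed

lemma eventually_sum_le_of_dyadic:
  fixes z :: "nat \<Rightarrow> real"
  assumes nonneg: "\<And>i. 0 \<le> z i" and "0 \<le> c"
    and dyadic: "eventually (\<lambda>k. (\<Sum>i<2^k. z i) \<le> c * 2^k) sequentially"
  shows "eventually (\<lambda>n. (\<Sum>i<n. z i) \<le> 2 * c * real n) sequentially"
proof -
  have "eventually (\<lambda>n. (\<Sum>i<2 ^ Suc (floor_log n). z i) \<le> c * 2 ^ Suc (floor_log n)) sequentially"
    using dyadic by (intro eventually_floor_log eventually_sequentially_Suc[THEN iffD2])
  then show ?thesis
    using eventually_gt_at_top[of 0]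
  proof eventually_elim
    case (elim n)
    have "(\<Sum>i<n. z i) \<le> (\<Sum>i<2 ^ Suc (floor_log n). z i)"
      using floor_log_exp2_gt[of n] nonneg by (intro sum_mono2) auto
    also have "\<dots> \<le> 2 * c * 2 ^ floor_log n"
      using elim(1) by simp
    also have "\<dots> \<le> 2 * c * real n"
      using floor_log_real_bounds(1)[OF elim(2)] \<open>0 \<le> c\<close> by (intro mult_left_mono) auto
    finally show ?case .
  qed
qed

lemma eventually_sum_ge_of_dyadic:
  fixes z :: "nat \<Rightarrow> real"
  assumes nonneg: "\<And>i. 0 \<le> z i" and "0 \<le> c"
    and dyadic: "eventually (\<lambda>k. c * 2^k \<le> (\<Sum>i<2^k. z i)) sequentially"
  shows "eventually (\<lambda>n. c / 2 * real n \<le> (\<Sum>i<n. z i)) sequentially"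
  using eventually_floor_log[OF dyadic] eventually_gt_at_top[of 0]
proof eventually_elim
  case (elim n)
  have "c / 2 * real n \<le> c / 2 * 2 ^ Suc (floor_log n)"
    using floor_log_real_bounds(2)[of n] \<open>0 \<le> c\<close> by (intro mult_left_mono) auto
  also have "\<dots> \<le> (\<Sum>i<2 ^ floor_log n. z i)"
    using elim by simp
  also have "\<dots> \<le> (\<Sum>i<n. z i)"
    using floor_log_exp2_le[OF elim(2)] nonneg by (simp add: sum_mono2)
  finally show ?case .
qed

lemma (in prob_space) AE_eventually_notin_geometric:
  assumes "\<And>k. A k \<in> events" and "\<And>k. prob (A k) \<le> C * q ^ k" and "0 \<le> q" "q < 1"
  shows "AE \<omega> in M. eventually (\<lambda>k. \<omega> \<notin> A k) sequentially"
proof -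
  have "summable (\<lambda>k. C * q ^ k)"
    using assms by (intro summable_mult summable_geometric) auto
  then have "summable (\<lambda>k. prob (A k))"
    by (rule summable_comparison_test'[where N=0]) (use assms(2) in auto)
  then have "AE \<omega> in M. eventually (\<lambda>k. \<omega> \<in> space M - A k) sequentially"
    using assms(1) by (intro borel_cantelli_AE1) (simp_all add: emeasure_eq_measure)
  then show ?thesis
    by (rule eventually_mono) (auto elim: eventually_mono)
qed

lemma (in prob_space) AE_eventually_sum_ge_of_bounded:
  fixes \<xi> :: "nat \<Rightarrow> 'a \<Rightarrow> 'b::topological_space" and g :: "'b \<Rightarrow> real"
  assumes [measurable]: "\<And>i. \<xi> i \<in> borel_measurable M" "g \<in> borel_measurable borel"
    and indep: "\<And>i j. i \<noteq> j \<Longrightarrow> indep_var borel (\<xi> i) borel (\<xi> j)"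
    and distr: "\<And>i. distr M borel (\<xi> i) = distr M borel (\<xi> 0)"
    and nonneg: "\<And>x. 0 \<le> g x" and bounded: "\<And>x. g x \<le> b"
    and pos: "0 < expectation (\<lambda>\<omega>. g (\<xi> 0 \<omega>))"
  shows "AE \<omega> in M. eventually (\<lambda>n.
           expectation (\<lambda>\<omega>. g (\<xi> 0 \<omega>)) / 4 * real n \<le> (\<Sum>i<n. g (\<xi> i \<omega>))) sequentially"
proof -
  define \<mu> where "\<mu> = expectation (\<lambda>\<omega>. g (\<xi> 0 \<omega>))"
  define c where "c = expectation (\<lambda>\<omega>. (g (\<xi> 0 \<omega>))\<^sup>2)"
  define A where "A k = {\<omega>\<in>space M. \<mu> * 2^k / 2 \<le> \<bar>(\<Sum>i<2^k. g (\<xi> i \<omega>)) - real (2^k) * \<mu>\<bar>}"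
    for k :: nat
  have bound: "prob (A k) \<le> 4 * c / \<mu>\<^sup>2 * (1/2) ^ k" for k
  proof -
    have "prob (A k) \<le> real (2^k) * c / (\<mu> * 2^k / 2)\<^sup>2"
      unfolding A_def c_def \<mu>_def using nonneg bounded pos
      by (intro prob_sum_deviation_le[where b=b]) (auto intro: indep distr order.trans[OF _ bounded])
    also have "\<dots> = 4 * c / \<mu>\<^sup>2 * (1/2) ^ k"
      using pos by (simp add: \<mu>_def field_simps power2_eq_square power_divide)
    finally show ?thesis .
  qed
  have "AE \<omega> in M. eventually (\<lambda>k. \<omega> \<notin> A k) sequentially"
    by (rule AE_eventually_notin_geometric[OF _ bound]) (auto simp: A_def)
  then show ?thesis
    using AE_space
  proof eventually_elim
    case (elim \<omega>)
    have "\<mu> / 2 * 2^k \<le> (\<Sum>i<2^k. g (\<xi> i \<omega>))" if "\<omega> \<notin> A k" for k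
    proof -
      have "\<bar>(\<Sum>i<2^k. g (\<xi> i \<omega>)) - real (2^k) * \<mu>\<bar> < \<mu> * 2^k / 2"
        using that elim(2) unfolding A_def by auto
      then show ?thesis
        unfolding abs_less_iff by (simp add: field_simps)
    qed
    then have "eventually (\<lambda>k. \<mu> / 2 * 2^k \<le> (\<Sum>i<2^k. g (\<xi> i \<omega>))) sequentially"
      using elim(1) by (auto elim: eventually_mono)
    from eventually_sum_ge_of_dyadic[OF nonneg _ this] pos show ?case
      by (simp add: \<mu>_def)
  qed
qed

definition truncate_at :: "real \<Rightarrow> real \<Rightarrow> real" where
  "truncate_at r x = (if x \<le> r then x else 0)"

lemma truncate_at_square_le_powr:
  fixes x r p :: real
  assumes "0 \<le> x" "p \<le> 2"
  shows "(truncate_at r x)\<^sup>2 \<le> r powr (2 - p) * x powr p"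
proof (cases "0 < x \<and> x \<le> r")
  case True
  then have "(truncate_at r x)\<^sup>2 = x powr p * x powr (2 - p)"
    by (simp add: truncate_at_def powr_add[symmetric] power2_eq_square)
  also have "\<dots> \<le> x powr p * r powr (2 - p)"
    using True assms by (intro mult_left_mono powr_mono2) auto
  finally show ?thesis by (simp add: mult.commute)
qed (use assms in \<open>auto simp: truncate_at_def\<close>)

lemma (in prob_space) prob_some_exceeds_le:
  fixes \<xi> :: "nat \<Rightarrow> 'a \<Rightarrow> 'b::topological_space" and f :: "'b \<Rightarrow> real"
  assumes [measurable]: "\<And>i. \<xi> i \<in> borel_measurable M" "f \<in> borel_measurable borel"
    and distr: "\<And>i. distr M borel (\<xi> i) = distr M borel (\<xi> 0)"
    and nonneg: "\<And>x. 0 \<le> f x" and "0 < p" "0 < r"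
    and integrable: "integrable M (\<lambda>\<omega>. f (\<xi> 0 \<omega>) powr p)"
  shows "prob {\<omega>\<in>space M. \<exists>i<N. r < f (\<xi> i \<omega>)}
           \<le> real N * expectation (\<lambda>\<omega>. f (\<xi> 0 \<omega>) powr p) / r powr p"
proof -
  have "prob {\<omega>\<in>space M. \<exists>i<N. r < f (\<xi> i \<omega>)} = prob (\<Union>i<N. {\<omega>\<in>space M. \<xi> i \<omega> \<in> {x. r < f x}})"
    by (auto intro!: arg_cong[where f=prob])
  also have "\<dots> \<le> (\<Sum>i<N. prob {\<omega>\<in>space M. \<xi> i \<omega> \<in> {x. r < f x}})"
    by (rule finite_measure_subadditive_finite) auto
  also have "\<dots> = (\<Sum>i<N. prob {\<omega>\<in>space M. \<xi> 0 \<omega> \<in> {x. r < f x}})"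
    by (intro sum.cong refl measure_eq_if_distr_eq distr) measurable
  also have "\<dots> = real N * prob {\<omega>\<in>space M. r < f (\<xi> 0 \<omega>)}"
    by simp
  also have "\<dots> \<le> real N * prob {\<omega>\<in>space M. r powr p \<le> f (\<xi> 0 \<omega>) powr p}"
    using \<open>0 < p\<close> \<open>0 < r\<close> by (intro mult_left_mono finite_measure_mono) (auto intro: powr_mono2)
  also have "\<dots> \<le> real N * (expectation (\<lambda>\<omega>. f (\<xi> 0 \<omega>) powr p) / r powr p)"
    using \<open>0 < r\<close> integrable
    by (intro mult_left_mono integral_Markov_inequality_measure[where A="space M"]) auto
  finally show ?thesis by simp
qed

lemma (in prob_space) prob_truncated_sum_deviation_le:
  fixes \<xi> :: "nat \<Rightarrow> 'a \<Rightarrow> 'b::topological_space" and f :: "'b \<Rightarrow> real"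
  assumes [measurable]: "\<And>i. \<xi> i \<in> borel_measurable M" "f \<in> borel_measurable borel"
    and indep: "\<And>i j. i \<noteq> j \<Longrightarrow> indep_var borel (\<xi> i) borel (\<xi> j)"
    and distr: "\<And>i. distr M borel (\<xi> i) = distr M borel (\<xi> 0)"
    and nonneg: "\<And>x. 0 \<le> f x" and "p \<le> 2"
    and integrable: "integrable M (\<lambda>\<omega>. f (\<xi> 0 \<omega>) powr p)" and "0 < N"
  defines "g \<equiv> \<lambda>x. truncate_at (real N) (f x)"
  shows "prob {\<omega>\<in>space M. real N \<le> \<bar>(\<Sum>i<N. g (\<xi> i \<omega>)) - real N * expectation (\<lambda>\<omega>. g (\<xi> 0 \<omega>))\<bar>}
           \<le> expectation (\<lambda>\<omega>. f (\<xi> 0 \<omega>) powr p) * real N powr (1 - p)"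
proof -
  define r where "r = real N"
  have r: "1 \<le> r" using \<open>0 < N\<close> by (simp add: r_def)
  have [measurable]: "g \<in> borel_measurable borel"
    unfolding g_def truncate_at_def by measurable
  have g_bounded: "\<bar>g x\<bar> \<le> r" for x
    using nonneg[of x] r by (auto simp: g_def r_def truncate_at_def)
  have "integrable M (\<lambda>\<omega>. (g (\<xi> 0 \<omega>))\<^sup>2)"
    using power_mono[OF g_bounded abs_ge_zero, where n=2]
    by (intro integrable_const_bound[where B="r\<^sup>2"]) auto
  then have "expectation (\<lambda>\<omega>. (g (\<xi> 0 \<omega>))\<^sup>2)
      \<le> expectation (\<lambda>\<omega>. r powr (2 - p) * f (\<xi> 0 \<omega>) powr p)"
    unfolding g_def r_def using nonneg \<open>p \<le> 2\<close> integrable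
    by (intro integral_mono truncate_at_square_le_powr) auto
  then have second_moment: "expectation (\<lambda>\<omega>. (g (\<xi> 0 \<omega>))\<^sup>2)
      \<le> r powr (2 - p) * expectation (\<lambda>\<omega>. f (\<xi> 0 \<omega>) powr p)"
    by simp
  have "prob {\<omega>\<in>space M. r \<le> \<bar>(\<Sum>i<N. g (\<xi> i \<omega>)) - real N * expectation (\<lambda>\<omega>. g (\<xi> 0 \<omega>))\<bar>}
      \<le> r * expectation (\<lambda>\<omega>. (g (\<xi> 0 \<omega>))\<^sup>2) / r\<^sup>2"
    unfolding r_def using r indep distr g_bounded
    by (intro prob_sum_deviation_le[where \<xi>=\<xi> and g=g]) (auto simp: r_def)
  also have "\<dots> \<le> r * (r powr (2 - p) * expectation (\<lambda>\<omega>. f (\<xi> 0 \<omega>) powr p)) / r\<^sup>2"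
    using second_moment r by (intro divide_right_mono mult_left_mono) auto
  also have "\<dots> = expectation (\<lambda>\<omega>. f (\<xi> 0 \<omega>) powr p) * r powr (1 - p)"
    using r by (simp add: powr_diff power2_eq_square field_simps)
  finally show ?thesis
    by (simp add: r_def)
qed

text \<open>Truncating at level N, a large sum needs either one summand above N or a large
  deviation of the truncated sum; both are controlled by the p-th moment.\<close>

lemma (in prob_space) prob_sum_exceeds_le:
  fixes \<xi> :: "nat \<Rightarrow> 'a \<Rightarrow> 'b::topological_space" and f :: "'b \<Rightarrow> real"
  assumes [measurable]: "\<And>i. \<xi> i \<in> borel_measurable M" "f \<in> borel_measurable borel"
    and indep: "\<And>i j. i \<noteq> j \<Longrightarrow> indep_var borel (\<xi> i) borel (\<xi> j)"
    and distr: "\<And>i. distr M borel (\<xi> i) = distr M borel (\<xi> 0)"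
    and nonneg: "\<And>x. 0 \<le> f x" and p: "1 < p" "p \<le> 2"
    and integrable: "integrable M (\<lambda>\<omega>. f (\<xi> 0 \<omega>))" "integrable M (\<lambda>\<omega>. f (\<xi> 0 \<omega>) powr p)"
    and "0 < N"
  shows "prob {\<omega>\<in>space M. real N * (expectation (\<lambda>\<omega>. f (\<xi> 0 \<omega>)) + 1) < (\<Sum>i<N. f (\<xi> i \<omega>))}
           \<le> 2 * expectation (\<lambda>\<omega>. f (\<xi> 0 \<omega>) powr p) * real N powr (1 - p)"
proof -
  define r where "r = real N"
  define g where "g x = truncate_at r (f x)" for x
  let ?large = "{\<omega>\<in>space M. r * (expectation (\<lambda>\<omega>. f (\<xi> 0 \<omega>)) + 1) < (\<Sum>i<N. f (\<xi> i \<omega>))}"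
  let ?exceeds = "{\<omega>\<in>space M. \<exists>i<N. r < f (\<xi> i \<omega>)}"
  let ?deviates = "{\<omega>\<in>space M. r \<le> \<bar>(\<Sum>i<N. g (\<xi> i \<omega>)) - real N * expectation (\<lambda>\<omega>. g (\<xi> 0 \<omega>))\<bar>}"
  have r: "1 \<le> r" using \<open>0 < N\<close> by (simp add: r_def)
  have [measurable]: "g \<in> borel_measurable borel"
    unfolding g_def truncate_at_def by measurable
  have "\<bar>g x\<bar> \<le> r" for x
    using nonneg[of x] r by (auto simp: g_def truncate_at_def)
  then have "integrable M (\<lambda>\<omega>. g (\<xi> 0 \<omega>))"
    by (intro integrable_const_bound[where B=r]) auto
  then have mean: "r * expectation (\<lambda>\<omega>. g (\<xi> 0 \<omega>)) \<le> r * expectation (\<lambda>\<omega>. f (\<xi> 0 \<omega>))"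
    using integrable(1) nonneg r
    by (intro mult_left_mono integral_mono) (auto simp: g_def truncate_at_def)
  have "?large \<subseteq> ?exceeds \<union> ?deviates"
  proof (intro subsetI, rule ccontr)
    fix \<omega> assume large: "\<omega> \<in> ?large" and "\<omega> \<notin> ?exceeds \<union> ?deviates"
    then have "\<And>i. i < N \<Longrightarrow> f (\<xi> i \<omega>) \<le> r"
      and "(\<Sum>i<N. g (\<xi> i \<omega>)) < r * expectation (\<lambda>\<omega>. g (\<xi> 0 \<omega>)) + r"
      by (auto simp: r_def not_less abs_less_iff dest: leD)
    moreover from this(1) have "(\<Sum>i<N. f (\<xi> i \<omega>)) = (\<Sum>i<N. g (\<xi> i \<omega>))"
      by (auto simp: g_def truncate_at_def intro!: sum.cong)
    moreover have "r * expectation (\<lambda>\<omega>. f (\<xi> 0 \<omega>)) + r < (\<Sum>i<N. f (\<xi> i \<omega>))"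
      using large by (simp add: algebra_simps)
    ultimately show False
      using mean by linarith
  qed
  then have "prob ?large \<le> prob (?exceeds \<union> ?deviates)"
    by (rule finite_measure_mono) measurable
  also have "\<dots> \<le> prob ?exceeds + prob ?deviates"
    by (rule measure_Un_le) measurable
  also have "\<dots> \<le> 2 * expectation (\<lambda>\<omega>. f (\<xi> 0 \<omega>) powr p) * r powr (1 - p)"
    using prob_some_exceeds_le[where \<xi>=\<xi> and f=f and p=p and r=r and N=N]
      prob_truncated_sum_deviation_le[where \<xi>=\<xi> and f=f and p=p and N=N]
      indep distr nonneg integrable(2) p r
    by (simp add: r_def g_def powr_diff field_simps)
  finally show ?thesis
    by (simp add: r_def)
qed

lemma (in prob_space) AE_eventually_sum_le_of_moment:
  fixes \<xi> :: "nat \<Rightarrow> 'a \<Rightarrow> 'b::topological_space" and f :: "'b \<Rightarrow> real"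
  assumes [measurable]: "\<And>i. \<xi> i \<in> borel_measurable M" "f \<in> borel_measurable borel"
    and indep: "\<And>i j. i \<noteq> j \<Longrightarrow> indep_var borel (\<xi> i) borel (\<xi> j)"
    and distr: "\<And>i. distr M borel (\<xi> i) = distr M borel (\<xi> 0)"
    and nonneg: "\<And>x. 0 \<le> f x" and p: "1 < p" "p \<le> 2"
    and integrable: "integrable M (\<lambda>\<omega>. f (\<xi> 0 \<omega>))" "integrable M (\<lambda>\<omega>. f (\<xi> 0 \<omega>) powr p)"
  shows "AE \<omega> in M. eventually (\<lambda>n.
           (\<Sum>i<n. f (\<xi> i \<omega>)) \<le> 2 * (expectation (\<lambda>\<omega>. f (\<xi> 0 \<omega>)) + 1) * real n) sequentially"
proof -
  define \<mu> where "\<mu> = expectation (\<lambda>\<omega>. f (\<xi> 0 \<omega>))"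
  define A where "A k = {\<omega>\<in>space M. real (2^k) * (\<mu> + 1) < (\<Sum>i<2^k. f (\<xi> i \<omega>))}" for k :: nat
  have "0 \<le> \<mu>" unfolding \<mu>_def using nonneg by (simp add: integral_nonneg_AE)
  have bound: "prob (A k) \<le> 2 * expectation (\<lambda>\<omega>. f (\<xi> 0 \<omega>) powr p) * (2 powr (1 - p)) ^ k" for k
    using prob_sum_exceeds_le[where \<xi>=\<xi> and f=f and N="2^k"] indep distr nonneg p integrable
    by (simp add: A_def \<mu>_def powr_power powr_realpow[symmetric] powr_powr mult.commute)
  have "AE \<omega> in M. eventually (\<lambda>k. \<omega> \<notin> A k) sequentially"
    using p by (intro AE_eventually_notin_geometric[OF _ bound]) (auto simp: A_def intro: powr_less_one)
  then show ?thesis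
    using AE_space
  proof eventually_elim
    case (elim \<omega>)
    then have "eventually (\<lambda>k. (\<Sum>i<2^k. f (\<xi> i \<omega>)) \<le> (\<mu> + 1) * 2^k) sequentially"
      by (auto simp: A_def not_less mult.commute elim: eventually_mono)
    from eventually_sum_le_of_dyadic[OF nonneg _ this] \<open>0 \<le> \<mu>\<close> show ?case
      by (simp add: \<mu>_def)
  qed
qed

section \<open>Deterministic bounds on the corrected likelihood\<close>

lemma ln_le_linear: "0 < e \<Longrightarrow> 0 < x \<Longrightarrow> ln x \<le> e * x - 1 - ln (e::real)"
  using ln_le_minus_one[of "e * x"] by (simp add: ln_mult)

lemma scaled_sum_ereal_le:
  fixes q :: "nat \<Rightarrow> ereal"
  assumes "0 < n" and "\<And>i. i < n \<Longrightarrow> q i \<le> ereal (u i)" and "(\<Sum>i<n. u i) \<le> real n * s"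
  shows "ereal (1 / real n) * (\<Sum>i<n. q i) \<le> ereal s"
proof -
  have "(\<Sum>i<n. q i) \<le> ereal (real n * s)"
    using order.trans[OF sum_mono[of "{..<n}" q "\<lambda>i. ereal (u i)"]] assms by auto
  then have "ereal (1 / real n) * (\<Sum>i<n. q i) \<le> ereal (1 / real n) * ereal (real n * s)"
    by (rule ereal_mult_left_mono) simp
  also have "\<dots> = ereal s" using \<open>0 < n\<close> by simp
  finally show ?thesis .
qed

lemma scaled_sum_ereal_ge:
  fixes q :: "nat \<Rightarrow> ereal"
  assumes "0 < n" and "\<And>i. i < n \<Longrightarrow> ereal (u i) \<le> q i" and "real n * s \<le> (\<Sum>i<n. u i)"
  shows "ereal s \<le> ereal (1 / real n) * (\<Sum>i<n. q i)"
proof -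
  have "ereal (real n * s) \<le> (\<Sum>i<n. q i)"
    using order.trans[OF _ sum_mono[of "{..<n}" "\<lambda>i. ereal (u i)" q]] assms by auto
  then have "ereal (1 / real n) * ereal (real n * s) \<le> ereal (1 / real n) * (\<Sum>i<n. q i)"
    by (rule ereal_mult_left_mono) simp
  moreover have "ereal (1 / real n) * ereal (real n * s) = ereal s" using \<open>0 < n\<close> by simp
  ultimately show ?thesis by simp
qed

lemma SUP_Times_Diff_le:
  fixes Q :: "'a \<Rightarrow> 'b \<Rightarrow> 'c::complete_lattice"
  assumes "\<And>x y. x \<in> A \<Longrightarrow> x \<notin> B \<Longrightarrow> y \<in> Y \<Longrightarrow> Q x y \<le> c"
  shows "(SUP p\<in>(A \<times> Y) - (B \<times> Y). Q (fst p) (snd p)) \<le> c"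
proof (rule SUP_least)
  fix p assume "p \<in> (A \<times> Y) - (B \<times> Y)"
  then obtain x y where "p = (x, y)" "x \<in> A" "x \<notin> B" "y \<in> Y"
    by auto
  with assms show "Q (fst p) (snd p) \<le> c"
    by simp
qed

lemma limsup_tendsto_MInfty_of_linear_bound:
  fixes f :: "real \<Rightarrow> nat \<Rightarrow> ereal"
  assumes "0 < e" and bound: "\<And>R. Rmin \<le> R \<Longrightarrow> eventually (\<lambda>n. f R n \<le> ereal (H - e * R)) sequentially"
  shows "((\<lambda>R. limsup (f R)) \<longlongrightarrow> -\<infinity>) at_top"
  unfolding tendsto_MInfty eventually_at_top_linorder
proof (intro allI)
  fix r
  show "\<exists>R1. \<forall>R\<ge>R1. limsup (f R) < ereal r"
  proof (intro exI[of _ "max Rmin ((H - r + 1) / e)"] allI impI)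
    fix R assume R: "max Rmin ((H - r + 1) / e) \<le> R"
    then have "limsup (f R) \<le> ereal (H - e * R)"
      using bound by (intro Limsup_bounded) auto
    also have "\<dots> < ereal r"
      using R \<open>0 < e\<close> by (simp add: field_simps)
    finally show "limsup (f R) < ereal r" .
  qed
qed

lemma Klam_continuous_on:
  assumes "lam \<in> Klam L \<tau>" "0 \<le> L"
  shows "continuous_on {0..\<tau>} lam"
proof -
  have "L-lipschitz_on {0..\<tau>} lam"
    using assms unfolding Klam_def by (intro lipschitz_onI) (auto simp: dist_real_def)
  then show ?thesis by (rule lipschitz_on_continuous_on)
qed

lemma Klam_dist_le:
  assumes "lam \<in> Klam L \<tau>" "0 \<le> L" "s \<in> {0..\<tau>}" "t \<in> {0..\<tau>}"
  shows "\<bar>lam s - lam t\<bar> \<le> L * \<tau>"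
proof -
  have "\<bar>lam s - lam t\<bar> \<le> L * \<bar>s - t\<bar>"
    using assms unfolding Klam_def by blast
  also have "\<dots> \<le> L * \<tau>"
    using assms by (intro mult_left_mono) auto
  finally show ?thesis .
qed

lemma Klam_integral_ge:
  assumes lam: "lam \<in> Klam L \<tau>" and "0 \<le> L" "t \<in> {0..\<tau>}" "y \<in> {0..\<tau>}"
  shows "(lam t - L * \<tau>) * y \<le> integral {0..y} lam"
proof -
  have "continuous_on {0..y} lam"
    using assms by (intro continuous_on_subset[OF Klam_continuous_on[OF lam]]) auto
  then have "integral {0..y} (\<lambda>_. lam t - L * \<tau>) \<le> integral {0..y} lam"
  proof (intro integral_le integrable_continuous_interval continuous_on_const)
    fix u assume "u \<in> {0..y}"
    with \<open>y \<in> _\<close> have "u \<in> {0..\<tau>}" by auto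
    from Klam_dist_le[OF lam \<open>0 \<le> L\<close> this \<open>t \<in> _\<close>] show "lam t - L * \<tau> \<le> lam u"
      by linarith
  qed
  then show ?thesis
    using \<open>y \<in> _\<close> by (simp add: mult.commute)
qed

lemma inner_le_exp_mult:
  fixes b w :: "'a::real_inner"
  assumes "norm b \<le> a" "norm w \<le> V"
  shows "\<bar>b \<bullet> w\<bar> \<le> a * V" and "b \<bullet> w \<le> exp (a * V)"
proof -
  show *: "\<bar>b \<bullet> w\<bar> \<le> a * V"
    using Cauchy_Schwarz_ineq2[of b w] assms by (meson mult_mono norm_ge_zero order.trans)
  show "b \<bullet> w \<le> exp (a * V)"
    using * exp_ge_add_one_self[of "a * V"] by linarith
qed

lemma qcor_le:
  fixes w b :: "real^'m"
  assumes lam: "lam \<in> Klam L \<tau>" and "0 \<le> L" and t: "t \<in> {0..\<tau>}"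
    and large: "L * \<tau> \<le> lam t" "1 \<le> lam t" and y: "y \<in> {0..\<tau>}"
    and MU: "0 < MU b" "MU b \<le> Mx" and b: "norm b \<le> a" and w: "norm w \<le> V"
  shows "qcor MU y d w lam b
           \<le> ereal (ln (lam t + L * \<tau>) + exp (a * V) - (lam t - L * \<tau>) / Mx * (exp (- a * V) * y))"
proof -
  define E where "E = exp (b \<bullet> w) / MU b * integral {0..y} lam"
  have cumulative: "(lam t - L * \<tau>) / Mx * (exp (- a * V) * y) \<le> E"
  proof -
    have "exp (- a * V) \<le> exp (b \<bullet> w)"
      using inner_le_exp_mult(1)[OF b w] by simp
    moreover have "1 / Mx \<le> 1 / MU b"
      using MU by (simp add: frac_le)
    moreover have "(lam t - L * \<tau>) * y \<le> integral {0..y} lam"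
      using Klam_integral_ge[OF lam \<open>0 \<le> L\<close> t y] .
    ultimately have "exp (- a * V) * (1 / Mx) * ((lam t - L * \<tau>) * y)
        \<le> exp (b \<bullet> w) * (1 / MU b) * integral {0..y} lam"
      using large y MU by (intro mult_mono) auto
    then show ?thesis
      by (simp add: E_def field_simps)
  qed
  show ?thesis
  proof (cases "d \<and> lam y \<noteq> 0")
    case True
    moreover have "0 \<le> lam y"
      using lam y unfolding Klam_def by blast
    moreover have "lam y \<le> lam t + L * \<tau>"
      using Klam_dist_le[OF lam \<open>0 \<le> L\<close> y t] by linarith
    ultimately have "ln (lam y) \<le> ln (lam t + L * \<tau>)"
      by simp
    with True cumulative inner_le_exp_mult(2)[OF b w] show ?thesis
      by (simp add: qcor_def E_def)
  next
    case False
    then have "qcor MU y d w lam b \<le> ereal (- E)"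
      by (auto simp: qcor_def E_def)
    moreover have "0 \<le> ln (lam t + L * \<tau>)"
      using large \<open>0 \<le> L\<close> t by (intro ln_ge_zero) (auto intro: add_increasing2)
    moreover have "- E \<le> ln (lam t + L * \<tau>) + exp (a * V) - (lam t - L * \<tau>) / Mx * (exp (- a * V) * y)"
      using cumulative exp_gt_zero[of "a * V"] calculation(2) by linarith
    ultimately show ?thesis
      by (auto intro: order.trans)
  qed
qed

lemma qcor_const_one_ge:
  fixes w b :: "real^'m"
  assumes "y \<le> \<tau>" "0 \<le> \<tau>" and "0 < MU b" and b: "norm b \<le> a" and w: "norm w \<le> V"
  shows "ereal (- (1 + \<tau> / MU b) * exp (a * V)) \<le> qcor MU y d w (\<lambda>_. 1) b"
proof -
  have "integral {0..y} (\<lambda>_. 1::real) \<le> \<tau>" "0 \<le> integral {0..y} (\<lambda>_. 1::real)"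
    using assms by auto
  then have "exp (b \<bullet> w) / MU b * integral {0..y} (\<lambda>_. 1) \<le> exp (a * V) / MU b * \<tau>"
    using inner_le_exp_mult(1)[OF b w] assms by (intro mult_mono divide_right_mono) auto
  moreover have "- exp (a * V) \<le> b \<bullet> w"
    using inner_le_exp_mult(1)[OF b w] exp_ge_add_one_self[of "a * V"] unfolding abs_le_iff by linarith
  then have "- exp (a * V) \<le> (if d then b \<bullet> w else 0)"
    by simp
  ultimately have "- (1 + \<tau> / MU b) * exp (a * V)
      \<le> (if d then b \<bullet> w else 0) - exp (b \<bullet> w) / MU b * integral {0..y} (\<lambda>_. 1)"
    by (simp add: algebra_simps)
  then show ?thesis
    by (cases d) (auto simp: qcor_def)
qed

section \<open>The tail estimate\<close>

text \<open>Only these hypotheses enter the tail estimate.\<close>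

locale corrected_cox_sample = prob_space M
  for M :: "'w measure"
    and T C :: "nat \<Rightarrow> 'w \<Rightarrow> real" and X U :: "nat \<Rightarrow> 'w \<Rightarrow> real^'m"
    and \<tau> L D :: real and \<Theta> :: "(real^'m) set" +
  assumes observations_measurable: "\<And>i. (\<lambda>\<omega>. ((T i \<omega>, X i \<omega>), C i \<omega>, U i \<omega>)) \<in> borel_measurable M"
    and observations_indep: "indep_vars (\<lambda>_. borel) (\<lambda>i \<omega>. ((T i \<omega>, X i \<omega>), C i \<omega>, U i \<omega>)) UNIV"
    and observations_distr: "\<And>i. distr M borel (\<lambda>\<omega>. ((T i \<omega>, X i \<omega>), C i \<omega>, U i \<omega>))
                                = distr M borel (\<lambda>\<omega>. ((T 0 \<omega>, X 0 \<omega>), C 0 \<omega>, U 0 \<omega>))"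
    and lifetime_censoring_indep: "indep_rv M (\<lambda>\<omega>. (T 0 \<omega>, X 0 \<omega>)) (\<lambda>\<omega>. (C 0 \<omega>, U 0 \<omega>))"
    and lifetime_pos: "prob {\<omega>\<in>space M. 0 < T 0 \<omega>} = 1"
    and censoring_nonneg: "AE \<omega> in M. 0 \<le> C 0 \<omega>"
    and censoring_le: "prob {\<omega>\<in>space M. \<tau> < C 0 \<omega>} = 0"
    and censoring_pos: "0 < prob {\<omega>\<in>space M. 0 < C 0 \<omega>}"
    and tau_pos: "0 < \<tau>" and L_nonneg: "0 \<le> L"
    and Theta_bounded: "bounded \<Theta>" and Theta_nonempty: "\<Theta> \<noteq> {}"
    and moment_rate: "(SUP b\<in>\<Theta>. norm b) < D"
    and exp_moment_X: "integrable M (\<lambda>\<omega>. exp (D * norm (X 0 \<omega>)))"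
    and exp_moment_U: "integrable M (\<lambda>\<omega>. exp (D * norm (U 0 \<omega>)))"
begin

definition obs :: "nat \<Rightarrow> 'w \<Rightarrow> (real \<times> (real^'m)) \<times> real \<times> (real^'m)" where
  "obs i = (\<lambda>\<omega>. ((T i \<omega>, X i \<omega>), C i \<omega>, U i \<omega>))"

definition Theta_radius :: real where
  "Theta_radius = (SUP b\<in>\<Theta>. norm b)"

definition obs_norm :: "nat \<Rightarrow> 'w \<Rightarrow> real" where
  "obs_norm i \<omega> = norm (X i \<omega>) + norm (U i \<omega>)"

definition mgf_bound :: real where
  "mgf_bound = expectation (\<lambda>\<omega>. exp (D * norm (U 0 \<omega>)))"

lemma obs_measurable [measurable]: "obs i \<in> borel_measurable M"
  unfolding obs_def by (rule observations_measurable)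

lemma obs_indep: "i \<noteq> j \<Longrightarrow> indep_var borel (obs i) borel (obs j)"
  unfolding obs_def by (rule indep_var_if_indep_vars[OF observations_indep]) auto

lemma obs_distr: "distr M borel (obs i) = distr M borel (obs 0)"
  unfolding obs_def by (rule observations_distr)

lemma components_measurable [measurable]:
  "T i \<in> borel_measurable M" "X i \<in> borel_measurable M"
  "C i \<in> borel_measurable M" "U i \<in> borel_measurable M"
proof -
  have "(\<lambda>\<omega>. fst (fst (obs i \<omega>))) \<in> borel_measurable M" "(\<lambda>\<omega>. snd (fst (obs i \<omega>))) \<in> borel_measurable M"
    "(\<lambda>\<omega>. fst (snd (obs i \<omega>))) \<in> borel_measurable M" "(\<lambda>\<omega>. snd (snd (obs i \<omega>))) \<in> borel_measurable M"
    by measurable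
  then show "T i \<in> borel_measurable M" "X i \<in> borel_measurable M"
    "C i \<in> borel_measurable M" "U i \<in> borel_measurable M"
    by (simp_all add: obs_def)
qed

lemma covariate_error_indep: "indep_var borel (X 0) borel (U 0)"
proof -
  have "indep_var borel (\<lambda>\<omega>. (T 0 \<omega>, X 0 \<omega>)) borel (\<lambda>\<omega>. (C 0 \<omega>, U 0 \<omega>))"
    by (rule indep_var_if_indep_rv[OF _ _ lifetime_censoring_indep]) measurable
  from indep_var_compose[OF this measurable_snd_borel measurable_snd_borel] show ?thesis
    by (simp add: comp_def)
qed

lemma norm_le_Theta_radius:
  assumes "b \<in> \<Theta>"
  shows "norm b \<le> Theta_radius"
proof -
  obtain B where "\<forall>x\<in>\<Theta>. norm x \<le> B"
    using Theta_bounded unfolding bounded_iff by blast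
  with assms show ?thesis
    unfolding Theta_radius_def by (intro cSUP_upper bdd_aboveI2) auto
qed

lemma Theta_radius_nonneg: "0 \<le> Theta_radius"
proof -
  obtain b where "b \<in> \<Theta>" using Theta_nonempty by blast
  with norm_le_Theta_radius show ?thesis
    by (meson norm_ge_zero order.trans)
qed

lemma Theta_radius_less: "Theta_radius < D"
  using moment_rate by (simp add: Theta_radius_def)

lemma AE_observation_window: "AE \<omega> in M. \<forall>i. 0 < T i \<omega> \<and> 0 \<le> C i \<omega> \<and> C i \<omega> \<le> \<tau>"
proof -
  let ?W = "{z :: (real \<times> (real^'m)) \<times> real \<times> (real^'m).
    0 < fst (fst z) \<and> 0 \<le> fst (snd z) \<and> fst (snd z) \<le> \<tau>}"
  have "?W \<in> sets borel"
    by measurable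
  moreover have "AE \<omega> in M. obs 0 \<omega> \<in> ?W"
  proof -
    have "AE \<omega> in M. 0 < T 0 \<omega>"
      using lifetime_pos by (subst (asm) prob_Collect_eq_1) auto
    moreover have "AE \<omega> in M. \<not> \<tau> < C 0 \<omega>"
      using censoring_le by (subst (asm) prob_Collect_eq_0) auto
    ultimately show ?thesis
      using censoring_nonneg by eventually_elim (auto simp: obs_def)
  qed
  ultimately have "AE \<omega> in M. obs i \<omega> \<in> ?W" for i
    by (rule AE_if_distr_eq[OF obs_measurable obs_measurable _ obs_distr])
  then show ?thesis
    unfolding AE_all_countable by (simp add: obs_def)
qed

lemma mgf_pos_le:
  assumes "b \<in> \<Theta>"
  shows "0 < mgf M (U 0) b" and "mgf M (U 0) b \<le> mgf_bound"
proof -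
  have le: "exp (b \<bullet> U 0 \<omega>) \<le> exp (D * norm (U 0 \<omega>))" for \<omega>
    using inner_le_exp_mult(1)[of b D "U 0 \<omega>" "norm (U 0 \<omega>)"]
      norm_le_Theta_radius[OF assms] Theta_radius_less
    by simp
  then have integrable: "integrable M (\<lambda>\<omega>. exp (b \<bullet> U 0 \<omega>))"
    by (intro Bochner_Integration.integrable_bound[OF exp_moment_U]) auto
  then show "0 < mgf M (U 0) b"
    unfolding mgf_def using prob_space by (intro expectation_pos[where P="\<lambda>_. True"]) (auto intro: AE_I2)
  show "mgf M (U 0) b \<le> mgf_bound"
    unfolding mgf_def mgf_bound_def using integrable exp_moment_U le by (rule integral_mono)
qed

lemma AE_eventually_exp_obs_norm_sum_le:
  assumes "D / 2 \<le> a" "a < D"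
  obtains K where "AE \<omega> in M. eventually (\<lambda>n. (\<Sum>i<n. exp (a * obs_norm i \<omega>)) \<le> K * real n) sequentially"
proof -
  define f where "f z = exp (a * (norm (snd (fst z)) + norm (snd (snd z))))"
    for z :: "(real \<times> (real^'m)) \<times> real \<times> (real^'m)"
  define p where "p = D / a"
  have "0 < a"
    using assms Theta_radius_nonneg Theta_radius_less by linarith
  then have p: "1 < p" "p \<le> 2"
    using assms by (auto simp: p_def field_simps)
  have [measurable]: "f \<in> borel_measurable borel"
    unfolding f_def by measurable
  have f_obs: "f (obs i \<omega>) = exp (a * obs_norm i \<omega>)" for i \<omega>
    by (simp add: f_def obs_def obs_norm_def)
  have product: "integrable M (\<lambda>\<omega>. exp (D * norm (X 0 \<omega>)) * exp (D * norm (U 0 \<omega>)))"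
    using exp_moment_X exp_moment_U
    by (intro indep_var_integral_mult(2)[OF covariate_error_indep, where f="\<lambda>x. exp (D * norm x)"]) auto
  have "f (obs 0 \<omega>) powr p = exp (D * norm (X 0 \<omega>)) * exp (D * norm (U 0 \<omega>))" for \<omega>
    using \<open>0 < a\<close> by (simp add: f_def obs_def powr_def p_def exp_add[symmetric] algebra_simps)
  with product have integrable_powr: "integrable M (\<lambda>\<omega>. f (obs 0 \<omega>) powr p)"
    by simp
  have integrable: "integrable M (\<lambda>\<omega>. f (obs 0 \<omega>))"
  proof (rule Bochner_Integration.integrable_bound[OF product])
    have "a * obs_norm 0 \<omega> \<le> D * obs_norm 0 \<omega>" for \<omega>
      using assms by (intro mult_right_mono) (auto simp: obs_norm_def)
    then show "AE \<omega> in M. norm (f (obs 0 \<omega>)) \<le> norm (exp (D * norm (X 0 \<omega>)) * exp (D * norm (U 0 \<omega>)))"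
      by (simp add: f_obs obs_norm_def exp_add[symmetric] algebra_simps)
  qed simp
  have "AE \<omega> in M. eventually (\<lambda>n.
      (\<Sum>i<n. f (obs i \<omega>)) \<le> 2 * (expectation (\<lambda>\<omega>. f (obs 0 \<omega>)) + 1) * real n) sequentially"
    by (rule AE_eventually_sum_le_of_moment[where \<xi>=obs and f=f and p=p])
      (use obs_indep obs_distr p integrable integrable_powr in \<open>auto simp: f_def\<close>)
  then show ?thesis
    by (intro that) (simp add: f_obs)
qed

lemma AE_eventually_at_risk_sum_ge:
  assumes "0 \<le> a"
  obtains c where "0 < c"
    and "AE \<omega> in M. eventually (\<lambda>n.
           c * real n \<le> (\<Sum>i<n. exp (- a * obs_norm i \<omega>) * min (T i \<omega>) (C i \<omega>))) sequentially"
proof -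
  define g where "g z = exp (- a * (norm (snd (fst z)) + norm (snd (snd z))))
      * max 0 (min (min (fst (fst z)) (fst (snd z))) \<tau>)"
    for z :: "(real \<times> (real^'m)) \<times> real \<times> (real^'m)"
  have [measurable]: "g \<in> borel_measurable borel"
    unfolding g_def by measurable
  have g_nonneg: "0 \<le> g z" for z
    by (simp add: g_def)
  have g_le: "g z \<le> \<tau>" for z
  proof -
    have "exp (- a * (norm (snd (fst z)) + norm (snd (snd z)))) \<le> 1"
      using assms by simp
    then have "g z \<le> 1 * \<tau>"
      unfolding g_def using tau_pos by (intro mult_mono) auto
    then show ?thesis
      by simp
  qed
  have pos: "0 < expectation (\<lambda>\<omega>. g (obs 0 \<omega>))"
  proof (rule expectation_pos[where P="\<lambda>\<omega>. 0 < C 0 \<omega>"])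
    show "integrable M (\<lambda>\<omega>. g (obs 0 \<omega>))"
      using g_nonneg g_le by (intro integrable_const_bound[where B=\<tau>]) auto
    show "AE \<omega> in M. 0 < C 0 \<omega> \<longrightarrow> 0 < g (obs 0 \<omega>)"
      using AE_observation_window by eventually_elim (use tau_pos in \<open>simp add: g_def obs_def\<close>)
  qed (use g_nonneg censoring_pos in auto)
  have sums: "AE \<omega> in M. eventually (\<lambda>n.
      expectation (\<lambda>\<omega>. g (obs 0 \<omega>)) / 4 * real n \<le> (\<Sum>i<n. g (obs i \<omega>))) sequentially"
    by (rule AE_eventually_sum_ge_of_bounded[where \<xi>=obs and g=g and b=\<tau>])
      (use obs_indep obs_distr g_nonneg g_le pos in auto)
  have window_sum: "(\<Sum>i<n. g (obs i \<omega>)) = (\<Sum>i<n. exp (- a * obs_norm i \<omega>) * min (T i \<omega>) (C i \<omega>))"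
    if window: "\<forall>i. 0 < T i \<omega> \<and> 0 \<le> C i \<omega> \<and> C i \<omega> \<le> \<tau>" for n \<omega>
  proof (intro sum.cong refl)
    fix i
    from window have "0 < T i \<omega>" "0 \<le> C i \<omega>" "C i \<omega> \<le> \<tau>" by auto
    then show "g (obs i \<omega>) = exp (- a * obs_norm i \<omega>) * min (T i \<omega>) (C i \<omega>)"
      by (simp add: g_def obs_def obs_norm_def)
  qed
  have "AE \<omega> in M. eventually (\<lambda>n. expectation (\<lambda>\<omega>. g (obs 0 \<omega>)) / 4 * real n
      \<le> (\<Sum>i<n. exp (- a * obs_norm i \<omega>) * min (T i \<omega>) (C i \<omega>))) sequentially"
    using sums AE_observation_window by eventually_elim (simp add: window_sum)
  with pos show ?thesis
    by (intro that[of "expectation (\<lambda>\<omega>. g (obs 0 \<omega>)) / 4"]) simp_all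
qed

lemma mgf_bound_pos: "0 < mgf_bound"
  using Theta_nonempty mgf_pos_le by (meson ex_in_conv order_less_le_trans)

lemma Qcor_le_of_large_value:
  assumes window: "\<forall>i. 0 < T i \<omega> \<and> 0 \<le> C i \<omega> \<and> C i \<omega> \<le> \<tau>" and "0 < n"
    and cov: "(\<Sum>i<n. exp (a * obs_norm i \<omega>)) \<le> K * real n"
    and risk: "c * real n \<le> (\<Sum>i<n. exp (- a * obs_norm i \<omega>) * min (T i \<omega>) (C i \<omega>))"
    and "Theta_radius \<le> a" and lam: "lam \<in> Klam L \<tau>" and b: "b \<in> \<Theta>"
    and t: "t \<in> {0..\<tau>}" and large: "1 \<le> lam t" "L * \<tau> \<le> lam t"
  shows "Qcor M T X C U n lam b \<omega> \<le> ereal (ln (lam t + L * \<tau>) + K - (lam t - L * \<tau>) / mgf_bound * c)"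
proof -
  define s where "s = (lam t - L * \<tau>) / mgf_bound"
  define u where "u i = ln (lam t + L * \<tau>) + exp (a * obs_norm i \<omega>)
      - s * (exp (- a * obs_norm i \<omega>) * min (T i \<omega>) (C i \<omega>))" for i
  have "qcor (mgf M (U 0)) (min (T i \<omega>) (C i \<omega>)) (T i \<omega> \<le> C i \<omega>) (X i \<omega> + U i \<omega>) lam b \<le> ereal (u i)"
    for i
    unfolding u_def s_def
    using window[THEN spec, of i] mgf_pos_le[OF b] norm_le_Theta_radius[OF b] \<open>Theta_radius \<le> a\<close>
    by (intro qcor_le[OF lam L_nonneg t large(2,1)]) (auto simp: obs_norm_def norm_triangle_ineq)
  moreover have "(\<Sum>i<n. u i) \<le> real n * (ln (lam t + L * \<tau>) + K - s * c)"
  proof -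
    have "0 \<le> s"
      using large mgf_bound_pos by (simp add: s_def)
    with risk have "s * (c * real n) \<le> s * (\<Sum>i<n. exp (- a * obs_norm i \<omega>) * min (T i \<omega>) (C i \<omega>))"
      by (rule mult_left_mono)
    moreover have "(\<Sum>i<n. u i) = real n * ln (lam t + L * \<tau>) + (\<Sum>i<n. exp (a * obs_norm i \<omega>))
        - s * (\<Sum>i<n. exp (- a * obs_norm i \<omega>) * min (T i \<omega>) (C i \<omega>))"
      by (simp add: u_def sum.distrib sum_subtractf sum_distrib_left)
    ultimately have "(\<Sum>i<n. u i) \<le> real n * ln (lam t + L * \<tau>) + K * real n - s * (c * real n)"
      using cov by linarith
    then show ?thesis
      by (simp add: algebra_simps)
  qed
  ultimately show ?thesis
    unfolding Qcor_def s_def by (rule scaled_sum_ereal_le[OF \<open>0 < n\<close>])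
qed

lemma Qcor_const_one_ge:
  assumes window: "\<forall>i. 0 < T i \<omega> \<and> 0 \<le> C i \<omega> \<and> C i \<omega> \<le> \<tau>" and "0 < n"
    and cov: "(\<Sum>i<n. exp (a * obs_norm i \<omega>)) \<le> K * real n"
    and "Theta_radius \<le> a" and b: "b \<in> \<Theta>"
  shows "ereal (- (1 + \<tau> / mgf M (U 0) b) * K) \<le> Qcor M T X C U n (\<lambda>_. 1) b \<omega>"
  unfolding Qcor_def
proof (rule scaled_sum_ereal_ge[OF \<open>0 < n\<close>])
  fix i
  show "ereal (- (1 + \<tau> / mgf M (U 0) b) * exp (a * obs_norm i \<omega>))
      \<le> qcor (mgf M (U 0)) (min (T i \<omega>) (C i \<omega>)) (T i \<omega> \<le> C i \<omega>) (X i \<omega> + U i \<omega>) (\<lambda>_. 1) b"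
    using window[THEN spec, of i] tau_pos mgf_pos_le[OF b] norm_le_Theta_radius[OF b] \<open>Theta_radius \<le> a\<close>
    by (intro qcor_const_one_ge) (auto simp: obs_norm_def norm_triangle_ineq)
next
  let ?\<kappa> = "1 + \<tau> / mgf M (U 0) b"
  have "0 \<le> ?\<kappa>"
    using tau_pos mgf_pos_le[OF b] by simp
  with cov have "?\<kappa> * (\<Sum>i<n. exp (a * obs_norm i \<omega>)) \<le> ?\<kappa> * (K * real n)"
    by (rule mult_left_mono)
  moreover have "(\<Sum>i<n. - ?\<kappa> * exp (a * obs_norm i \<omega>)) = - (?\<kappa> * (\<Sum>i<n. exp (a * obs_norm i \<omega>)))"
    by (simp only: sum_distrib_left[symmetric] mult_minus_left sum_negf)
  ultimately show "real n * (- ?\<kappa> * K) \<le> (\<Sum>i<n. - ?\<kappa> * exp (a * obs_norm i \<omega>))"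
    by (simp add: algebra_simps)
qed

lemma Qcor_le_outside_core:
  assumes window: "\<forall>i. 0 < T i \<omega> \<and> 0 \<le> C i \<omega> \<and> C i \<omega> \<le> \<tau>" and "0 < n"
    and cov: "(\<Sum>i<n. exp (a * obs_norm i \<omega>)) \<le> K * real n"
    and risk: "2 * e * mgf_bound * real n \<le> (\<Sum>i<n. exp (- a * obs_norm i \<omega>) * min (T i \<omega>) (C i \<omega>))"
    and "Theta_radius \<le> a" and "0 < e"
    and R: "max 1 (L * \<tau>) \<le> R" and lam: "lam \<in> Klam L \<tau> - KlamR L \<tau> R" and b: "b \<in> \<Theta>"
  shows "Qcor M T X C U n lam b \<omega> \<le> ereal (K + 3 * (e * (L * \<tau>)) - 1 - ln e - e * R)"
proof -
  obtain t where t: "t \<in> {0..\<tau>}" and "R < lam t"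
    using lam by (force simp: KlamR_def Klam_def)
  then have large: "1 \<le> lam t" "L * \<tau> \<le> lam t"
    using R by auto
  have "0 \<le> L * \<tau>"
    using L_nonneg tau_pos by simp
  have "ln (lam t + L * \<tau>) \<le> e * (lam t + L * \<tau>) - 1 - ln e"
    using \<open>0 < e\<close> large \<open>0 \<le> L * \<tau>\<close> by (intro ln_le_linear) auto
  moreover have "(lam t - L * \<tau>) / mgf_bound * (2 * e * mgf_bound) = 2 * (e * lam t) - 2 * (e * (L * \<tau>))"
    using mgf_bound_pos by (simp add: field_simps)
  moreover have "e * R \<le> e * lam t"
    using \<open>0 < e\<close> \<open>R < lam t\<close> by simp
  ultimately have "ln (lam t + L * \<tau>) + K - (lam t - L * \<tau>) / mgf_bound * (2 * e * mgf_bound)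
      \<le> K + 3 * (e * (L * \<tau>)) - 1 - ln e - e * R"
    unfolding distrib_left by linarith
  then show ?thesis
    using Qcor_le_of_large_value[OF window \<open>0 < n\<close> cov risk \<open>Theta_radius \<le> a\<close> DiffD1[OF lam] b t large]
    by (auto intro: order.trans)
qed

lemma SUP_Qcor_core_ge:
  assumes window: "\<forall>i. 0 < T i \<omega> \<and> 0 \<le> C i \<omega> \<and> C i \<omega> \<le> \<tau>" and "0 < n"
    and cov: "(\<Sum>i<n. exp (a * obs_norm i \<omega>)) \<le> K * real n"
    and "Theta_radius \<le> a" and "\<beta> \<in> \<Theta>" and "1 \<le> R"
  shows "ereal (- ((1 + \<tau> / mgf M (U 0) \<beta>) * K))
           \<le> (SUP p\<in>KlamR L \<tau> R \<times> \<Theta>. Qcor M T X C U n (fst p) (snd p) \<omega>)"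
proof -
  have "((\<lambda>_. 1), \<beta>) \<in> KlamR L \<tau> R \<times> \<Theta>"
    using \<open>1 \<le> R\<close> \<open>\<beta> \<in> \<Theta>\<close> L_nonneg by (auto simp: KlamR_def Klam_def)
  moreover have "ereal (- ((1 + \<tau> / mgf M (U 0) \<beta>) * K)) \<le> Qcor M T X C U n (\<lambda>_. 1) \<beta> \<omega>"
    using Qcor_const_one_ge[OF window \<open>0 < n\<close> cov \<open>Theta_radius \<le> a\<close> \<open>\<beta> \<in> \<Theta>\<close>]
    by (simp add: algebra_simps)
  ultimately show ?thesis
    by (auto intro: SUP_upper2)
qed

lemma AE_eventually_SUP_Qcor_bounds:
  obtains e H G where "0 < e"
    and "AE \<omega> in M. eventually (\<lambda>n. \<forall>R \<ge> max 1 (L * \<tau>).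
          ereal (- G) \<le> (SUP p\<in>KlamR L \<tau> R \<times> \<Theta>. Qcor M T X C U n (fst p) (snd p) \<omega>) \<and>
          (SUP p\<in>(Klam L \<tau> \<times> \<Theta>) - (KlamR L \<tau> R \<times> \<Theta>). Qcor M T X C U n (fst p) (snd p) \<omega>)
            \<le> ereal (H - e * R)) sequentially"
proof -
  define a where "a = (Theta_radius + D) / 2"
  have a: "D / 2 \<le> a" "a < D" "Theta_radius \<le> a" "0 \<le> a"
    using Theta_radius_nonneg Theta_radius_less by (auto simp: a_def)
  obtain K where cov: "AE \<omega> in M. eventually (\<lambda>n.
      (\<Sum>i<n. exp (a * obs_norm i \<omega>)) \<le> K * real n) sequentially"
    using AE_eventually_exp_obs_norm_sum_le[OF a(1,2)] .
  obtain c where "0 < c" and risk: "AE \<omega> in M. eventually (\<lambda>n.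
      c * real n \<le> (\<Sum>i<n. exp (- a * obs_norm i \<omega>) * min (T i \<omega>) (C i \<omega>))) sequentially"
    using AE_eventually_at_risk_sum_ge[OF a(4)] .
  obtain \<beta> where "\<beta> \<in> \<Theta>"
    using Theta_nonempty by blast
  define e where "e = c / (2 * mgf_bound)"
  have "0 < e" and c: "c = 2 * e * mgf_bound"
    using \<open>0 < c\<close> mgf_bound_pos by (auto simp: e_def)
  have "AE \<omega> in M. eventually (\<lambda>n. \<forall>R \<ge> max 1 (L * \<tau>).
      ereal (- ((1 + \<tau> / mgf M (U 0) \<beta>) * K))
        \<le> (SUP p\<in>KlamR L \<tau> R \<times> \<Theta>. Qcor M T X C U n (fst p) (snd p) \<omega>) \<and>
      (SUP p\<in>(Klam L \<tau> \<times> \<Theta>) - (KlamR L \<tau> R \<times> \<Theta>). Qcor M T X C U n (fst p) (snd p) \<omega>)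
        \<le> ereal (K + 3 * (e * (L * \<tau>)) - 1 - ln e - e * R)) sequentially"
    using cov risk AE_observation_window
  proof eventually_elim
    case (elim \<omega>)
    from elim(1,2) eventually_gt_at_top[of 0] show ?case
    proof eventually_elim
      case (elim n)
      note bounds = \<open>\<forall>i. 0 < T i \<omega> \<and> 0 \<le> C i \<omega> \<and> C i \<omega> \<le> \<tau>\<close> \<open>0 < n\<close> elim(1)
      show ?case
        using SUP_Qcor_core_ge[OF bounds a(3) \<open>\<beta> \<in> \<Theta>\<close>]
          Qcor_le_outside_core[OF bounds elim(2)[unfolded c] a(3) \<open>0 < e\<close>]
        by (auto intro!: SUP_Times_Diff_le)
    qed
  qed
  then show ?thesis
    by (intro that[OF \<open>0 < e\<close>]) (auto elim!: eventually_mono)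
qed

theorem SUP_Qcor_core_gt_outside:
  "eventually (\<lambda>R. AE \<omega> in M. \<exists>n0. \<forall>n\<ge>n0.
     (SUP p\<in>KlamR L \<tau> R \<times> \<Theta>. Qcor M T X C U n (fst p) (snd p) \<omega>)
     > (SUP p\<in>(Klam L \<tau> \<times> \<Theta>) - (KlamR L \<tau> R \<times> \<Theta>). Qcor M T X C U n (fst p) (snd p) \<omega>)) at_top"
proof -
  obtain e H G where "0 < e" and bounds: "AE \<omega> in M. eventually (\<lambda>n. \<forall>R \<ge> max 1 (L * \<tau>).
      ereal (- G) \<le> (SUP p\<in>KlamR L \<tau> R \<times> \<Theta>. Qcor M T X C U n (fst p) (snd p) \<omega>) \<and>
      (SUP p\<in>(Klam L \<tau> \<times> \<Theta>) - (KlamR L \<tau> R \<times> \<Theta>). Qcor M T X C U n (fst p) (snd p) \<omega>)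
        \<le> ereal (H - e * R)) sequentially"
    by (rule AE_eventually_SUP_Qcor_bounds)
  have "AE \<omega> in M. \<exists>n0. \<forall>n\<ge>n0.
      (SUP p\<in>KlamR L \<tau> R \<times> \<Theta>. Qcor M T X C U n (fst p) (snd p) \<omega>)
      > (SUP p\<in>(Klam L \<tau> \<times> \<Theta>) - (KlamR L \<tau> R \<times> \<Theta>). Qcor M T X C U n (fst p) (snd p) \<omega>)"
    if R: "max (max 1 (L * \<tau>)) ((H + G) / e + 1) \<le> R" for R
  proof -
    have "ereal (H - e * R) < ereal (- G)"
      using R \<open>0 < e\<close> by (simp add: field_simps)

    from bounds show ?thesis
    proof eventually_elim
      case (elim \<omega>)
      then obtain N where N: "\<And>n. N \<le> n \<Longrightarrow> \<forall>R \<ge> max 1 (L * \<tau>).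
          ereal (- G) \<le> (SUP p\<in>KlamR L \<tau> R \<times> \<Theta>. Qcor M T X C U n (fst p) (snd p) \<omega>) \<and>
          (SUP p\<in>(Klam L \<tau> \<times> \<Theta>) - (KlamR L \<tau> R \<times> \<Theta>). Qcor M T X C U n (fst p) (snd p) \<omega>)
            \<le> ereal (H - e * R)"
        unfolding eventually_sequentially by blast
      show ?case
      proof (intro exI[of _ N] allI impI)
        fix n assume "N \<le> n"
        with N R \<open>ereal (H - e * R) < ereal (- G)\<close>
        show "(SUP p\<in>KlamR L \<tau> R \<times> \<Theta>. Qcor M T X C U n (fst p) (snd p) \<omega>)
            > (SUP p\<in>(Klam L \<tau> \<times> \<Theta>) - (KlamR L \<tau> R \<times> \<Theta>). Qcor M T X C U n (fst p) (snd p) \<omega>)"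
          by (meson max.boundedE order.strict_trans1 order.strict_trans2)
      qed
    qed
  qed
  then show ?thesis
    unfolding eventually_at_top_linorder by blast
qed

theorem limsup_SUP_Qcor_outside_tendsto_MInfty:
  "AE \<omega> in M. ((\<lambda>R. limsup (\<lambda>n. SUP p\<in>(Klam L \<tau> \<times> \<Theta>) - (KlamR L \<tau> R \<times> \<Theta>).
     Qcor M T X C U n (fst p) (snd p) \<omega>)) \<longlongrightarrow> -\<infinity>) at_top"
proof -
  obtain e H G where "0 < e" and bounds: "AE \<omega> in M. eventually (\<lambda>n. \<forall>R \<ge> max 1 (L * \<tau>).
      ereal (- G) \<le> (SUP p\<in>KlamR L \<tau> R \<times> \<Theta>. Qcor M T X C U n (fst p) (snd p) \<omega>) \<and>
      (SUP p\<in>(Klam L \<tau> \<times> \<Theta>) - (KlamR L \<tau> R \<times> \<Theta>). Qcor M T X C U n (fst p) (snd p) \<omega>)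
        \<le> ereal (H - e * R)) sequentially"
    by (rule AE_eventually_SUP_Qcor_bounds)
  from bounds show ?thesis
  proof eventually_elim
    case (elim \<omega>)
    show ?case
      using \<open>0 < e\<close> elim
      by (intro limsup_tendsto_MInfty_of_linear_bound[where Rmin="max 1 (L * \<tau>)" and H=H])
        (auto elim!: eventually_mono)
  qed
qed

end

theorem mainTheorem2:
  fixes M :: "'w measure"
    and T C :: "nat \<Rightarrow> 'w \<Rightarrow> real"
    and X U :: "nat \<Rightarrow> 'w \<Rightarrow> real^'m"
    and \<tau> L :: real
    and \<Theta> :: "(real^'m) set"
    and lam0 :: "real \<Rightarrow> real"
    and \<beta>0 :: "real^'m"
  assumes prob: "prob_space M"
    and tau_pos: "0 < \<tau>"
    and meas: "\<And>i. (\<lambda>\<omega>. ((T i \<omega>, X i \<omega>), C i \<omega>, U i \<omega>)) \<in> borel_measurable M"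
    and iid_indep: "prob_space.indep_vars M (\<lambda>_. borel)
                      (\<lambda>i \<omega>. ((T i \<omega>, X i \<omega>), C i \<omega>, U i \<omega>)) UNIV"
    and iid_distr: "\<And>i. distr M borel (\<lambda>\<omega>. ((T i \<omega>, X i \<omega>), C i \<omega>, U i \<omega>))
                        = distr M borel (\<lambda>\<omega>. ((T 0 \<omega>, X 0 \<omega>), C 0 \<omega>, U 0 \<omega>))"
    and indep1: "\<And>i. indep_rv M (\<lambda>\<omega>. (T i \<omega>, X i \<omega>)) (\<lambda>\<omega>. (C i \<omega>, U i \<omega>))"
    and indep2: "\<And>i. indep_rv M (C i) (U i)"
    and hazard: "\<And>i t B. t \<in> {0..\<tau>} \<Longrightarrow> B \<in> sets borel \<Longrightarrow>
        measure M {\<omega> \<in> space M. t < T i \<omega> \<and> X i \<omega> \<in> B}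
        = (\<integral>\<omega>. indicator B (X i \<omega>) *
                 exp (- integral {0..t} lam0 * exp (\<beta>0 \<bullet> X i \<omega>)) \<partial>M)"
    and C_range: "AE \<omega> in M. 0 \<le> C 0 \<omega>"
    and L_pos: "0 < L"
    and Theta_compact: "compact \<Theta>"
    and mom: "\<exists>\<epsilon>>0. let D = (SUP b\<in>\<Theta>. norm b) + \<epsilon> in
                 integrable M (\<lambda>\<omega>. exp (D * norm (U 0 \<omega>))) \<and>
                 integrable M (\<lambda>\<omega>. exp (D * norm (X 0 \<omega>)))"
    and U_mean: "(\<integral>\<omega>. U 0 \<omega> \<partial>M) = 0"
    and C_le_tau: "measure M {\<omega> \<in> space M. \<tau> < C 0 \<omega>} = 0"
    and C_near_tau: "\<And>\<epsilon>. 0 < \<epsilon> \<Longrightarrow> measure M {\<omega> \<in> space M. \<tau> - \<epsilon> < C 0 \<omega>} > 0"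
    and cov_pd: "\<And>a. a \<noteq> 0 \<Longrightarrow> (\<Sum>i\<in>UNIV. \<Sum>j\<in>UNIV. a $ i * a $ j * covmat M (X 0) i j) > 0"
    and lam0_K: "lam0 \<in> Klam L \<tau>"
    and beta0_Theta: "\<beta>0 \<in> \<Theta>"
    and lam0_pos: "\<And>t. t \<in> {0..\<tau>} \<Longrightarrow> 0 < lam0 t"
  shows "\<exists>R0. (\<forall>t\<in>{0..\<tau>}. lam0 t < R0) \<and>
           (\<forall>R\<ge>R0. AE \<omega> in M. \<exists>n0. \<forall>n\<ge>n0.
              (SUP p\<in>KlamR L \<tau> R \<times> \<Theta>. Qcor M T X C U n (fst p) (snd p) \<omega>)
              > (SUP p\<in>(Klam L \<tau> \<times> \<Theta>) - (KlamR L \<tau> R \<times> \<Theta>).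
                    Qcor M T X C U n (fst p) (snd p) \<omega>))
         \<and> (AE \<omega> in M. ((\<lambda>R. limsup (\<lambda>n. SUP p\<in>(Klam L \<tau> \<times> \<Theta>) - (KlamR L \<tau> R \<times> \<Theta>).
                    Qcor M T X C U n (fst p) (snd p) \<omega>)) \<longlongrightarrow> -\<infinity>) at_top)"
proof -
  interpret prob_space M by (rule prob)
  obtain \<epsilon> where "0 < \<epsilon>"
    and moments: "integrable M (\<lambda>\<omega>. exp (((SUP b\<in>\<Theta>. norm b) + \<epsilon>) * norm (U 0 \<omega>)))"
      "integrable M (\<lambda>\<omega>. exp (((SUP b\<in>\<Theta>. norm b) + \<epsilon>) * norm (X 0 \<omega>)))"
    using mom by (auto simp: Let_def)
  have "prob {\<omega>\<in>space M. 0 < T 0 \<omega>} = 1"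
    using hazard[where i=0 and t=0 and B=UNIV] tau_pos by (simp add: prob_space)
  then interpret cox: corrected_cox_sample M T C X U \<tau> L "(SUP b\<in>\<Theta>. norm b) + \<epsilon>" \<Theta>
    using meas iid_indep iid_distr indep1 C_range C_le_tau C_near_tau[of \<tau>] tau_pos L_pos
      compact_imp_bounded[OF Theta_compact] beta0_Theta \<open>0 < \<epsilon>\<close> moments
    by unfold_locales auto
  obtain R0 where R0: "\<And>R. R0 \<le> R \<Longrightarrow> AE \<omega> in M. \<exists>n0. \<forall>n\<ge>n0.
      (SUP p\<in>KlamR L \<tau> R \<times> \<Theta>. Qcor M T X C U n (fst p) (snd p) \<omega>)
      > (SUP p\<in>(Klam L \<tau> \<times> \<Theta>) - (KlamR L \<tau> R \<times> \<Theta>). Qcor M T X C U n (fst p) (snd p) \<omega>)"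
    using cox.SUP_Qcor_core_gt_outside unfolding eventually_at_top_linorder by blast
  have "lam0 t < max R0 (lam0 0 + L * \<tau> + 1)" if "t \<in> {0..\<tau>}" for t
    using Klam_dist_le[OF lam0_K _ that, of 0] L_pos tau_pos by auto
  then show ?thesis
    using R0 cox.limsup_SUP_Qcor_outside_tendsto_MInfty
    by (intro exI[of _ "max R0 (lam0 0 + L * \<tau> + 1)"]) auto
qed

end
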